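(* Let $k\ge 2$ be even, $\gamma>0$, and let $p\in\Delta([k])$ satisfy $d_{TV}(p,u)>\gamma$. Let $S$ be a uniformly random subset of $[k]$ of cardinality $k/2$. Then $$\Pr\Big[\Big|p(S)-\tfrac12\Big|>\frac{\gamma}{\sqrt{5k}}\Big]>\frac{1}{477}.$$
   Context: $\Delta([k])$ is the set of probability distributions on $[k]=\{1,\dots,k\}$, $u$ is the uniform distribution on $[k]$, $d_{TV}(p,q)=\frac12\|p-q\|_1$, and $p(S)=\sum_{x\in S}p(x)$. *)

theory Defs
  imports "HOL-Probability.Probability"
begin

definition in_simplex :: "nat \<Rightarrow> (nat \<Rightarrow> real) \<Rightarrow> bool" where
  "in_simplex k p \<longleftrightarrow> (\<forall>i\<in>{1..k}. p i \<ge> 0) \<and> (\<Sum>i\<in>{1..k}. p i) = 1"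

definition unif :: "nat \<Rightarrow> nat \<Rightarrow> real" where
  "unif k i = 1 / real k"

definition d_TV :: "nat \<Rightarrow> (nat \<Rightarrow> real) \<Rightarrow> (nat \<Rightarrow> real) \<Rightarrow> real" where
  "d_TV k p q = (1/2) * (\<Sum>i\<in>{1..k}. \<bar>p i - q i\<bar>)"

definition pset :: "(nat \<Rightarrow> real) \<Rightarrow> nat set \<Rightarrow> real" where
  "pset p S = (\<Sum>x\<in>S. p x)"

definition rand_subset :: "nat \<Rightarrow> nat \<Rightarrow> nat set pmf" where
  "rand_subset k m = pmf_of_set {S. S \<subseteq> {1..k} \<and> card S = m}"

end

theory Submission
  imports Defs
begin

text \<open>Write \<open>q = p - u\<close>, so that \<open>\<Sum>q = 0\<close> and \<open>p(S) - 1/2 = q(S)\<close> whenever \<open>|S| = k/2\<close>.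
  A uniform half-size subset is the image \<open>\<pi>(O)\<close> of the odd positions \<open>O\<close> under a uniform
  permutation \<open>\<pi>\<close> of \<open>[k]\<close>, and since \<open>\<Sum>q = 0\<close> we get \<open>X = q(\<pi>(O)) = \<Sum>\<^sub>j c\<^sub>j\<close> with
  \<open>c\<^sub>j = (q(\<pi>(2j-1)) - q(\<pi>(2j)))/2\<close>. Composing \<open>\<pi>\<close> with the transposition of the \<open>j\<close>-th pair
  flips the sign of \<open>c\<^sub>j\<close> and fixes the others, so the \<open>c\<^sub>j\<close> behave like independent symmetric
  variables: \<open>E[X\<^sup>2] = E[W]\<close> and \<open>E[X\<^sup>4] \<le> 3 E[W\<^sup>2]\<close> for \<open>W = \<Sum>\<^sub>j c\<^sub>j\<^sup>2\<close>. Pointwise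
  \<open>W \<le> \<parallel>q\<parallel>\<^sup>2/2\<close>, and since two distinct coordinates of a zero-sum vector are negatively
  correlated under a random permutation, \<open>E[W] \<ge> \<parallel>q\<parallel>\<^sup>2/4\<close>. Paley--Zygmund then yields
  \<open>P(|X| > t) > 1/10\<close> as soon as \<open>20 t\<^sup>2 < \<parallel>q\<parallel>\<^sup>2\<close>, and Cauchy--Schwarz turns
  \<open>d\<^sub>T\<^sub>V(p,u) > \<gamma>\<close> into \<open>\<parallel>q\<parallel>\<^sup>2 > 4\<gamma>\<^sup>2/k\<close>.\<close>

lemma sum_eq_zero_if_odd_under:
  fixes g :: "'a \<Rightarrow> real"
  assumes invariant: "\<And>f::'a \<Rightarrow> real. (\<Sum>x\<in>P. f (\<tau> x)) = (\<Sum>x\<in>P. f x)"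
    and odd: "\<And>x. x \<in> P \<Longrightarrow> g (\<tau> x) = - g x"
  shows "(\<Sum>x\<in>P. g x) = 0"
proof -
  have "(\<Sum>x\<in>P. g x) = (\<Sum>x\<in>P. g (\<tau> x))" using invariant[of g] by simp
  also have "\<dots> = - (\<Sum>x\<in>P. g x)" by (simp add: odd sum_negf)
  finally show ?thesis by simp
qed

lemma sum_weighted_square_sign_symmetric:
  fixes \<tau> :: "'b \<Rightarrow> 'a \<Rightarrow> 'a" and c :: "'b \<Rightarrow> 'a \<Rightarrow> real"
  assumes "finite J"
    and "\<And>j (f :: 'a \<Rightarrow> real). j \<in> J \<Longrightarrow> (\<Sum>x\<in>P. f (\<tau> j x)) = (\<Sum>x\<in>P. f x)"
    and "\<And>i j x. i \<in> J \<Longrightarrow> j \<in> J \<Longrightarrow> x \<in> P \<Longrightarrow>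
           c i (\<tau> j x) = (if i = j then - c i x else c i x)"
    and "\<And>j x. j \<in> J \<Longrightarrow> x \<in> P \<Longrightarrow> h (\<tau> j x) = h x"
  shows "(\<Sum>x\<in>P. h x * (\<Sum>j\<in>J. c j x)^2) = (\<Sum>x\<in>P. h x * (\<Sum>j\<in>J. (c j x)^2))"
  using assms
proof (induction J arbitrary: h rule: finite_induct)
  case empty
  then show ?case by simp
next
  case (insert a J)
  let ?Y = "\<lambda>x. \<Sum>j\<in>J. c j x"
  have cross: "(\<Sum>x\<in>P. h x * ?Y x * c a x) = 0"
  proof (rule sum_eq_zero_if_odd_under[where \<tau> = "\<tau> a"])
    show "(\<Sum>x\<in>P. f (\<tau> a x)) = (\<Sum>x\<in>P. f x)" for f :: "'a \<Rightarrow> real"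
      using insert.prems(1)[of a f] by simp
    show "h (\<tau> a x) * ?Y (\<tau> a x) * c a (\<tau> a x) = - (h x * ?Y x * c a x)" if "x \<in> P" for x
      using that insert.hyps(2) insert.prems by (auto intro!: sum.cong)
  qed
  have IH: "(\<Sum>x\<in>P. h x * ?Y x^2) = (\<Sum>x\<in>P. h x * (\<Sum>j\<in>J. (c j x)^2))"
    using insert.prems by (intro insert.IH) auto
  have "(\<Sum>x\<in>P. h x * (c a x + ?Y x)^2)
      = (\<Sum>x\<in>P. h x * ?Y x^2) + 2 * (\<Sum>x\<in>P. h x * ?Y x * c a x) + (\<Sum>x\<in>P. h x * (c a x)^2)"
    by (simp add: power2_eq_square algebra_simps sum.distrib sum_distrib_left)
  then show ?case
    using insert.hyps IH cross by (simp add: algebra_simps sum.distrib)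
qed

lemma sum_weighted_fourth_power_sign_symmetric:
  fixes \<tau> :: "'b \<Rightarrow> 'a \<Rightarrow> 'a" and c :: "'b \<Rightarrow> 'a \<Rightarrow> real"
  assumes "finite J"
    and "\<And>j (f :: 'a \<Rightarrow> real). j \<in> J \<Longrightarrow> (\<Sum>x\<in>P. f (\<tau> j x)) = (\<Sum>x\<in>P. f x)"
    and "\<And>i j x. i \<in> J \<Longrightarrow> j \<in> J \<Longrightarrow> x \<in> P \<Longrightarrow>
           c i (\<tau> j x) = (if i = j then - c i x else c i x)"
    and "\<And>j x. j \<in> J \<Longrightarrow> x \<in> P \<Longrightarrow> h (\<tau> j x) = h x"
    and "\<And>x. x \<in> P \<Longrightarrow> h x \<ge> 0"
  shows "(\<Sum>x\<in>P. h x * (\<Sum>j\<in>J. c j x)^4) \<le> 3 * (\<Sum>x\<in>P. h x * (\<Sum>j\<in>J. (c j x)^2)^2)"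
  using assms
proof (induction J arbitrary: h rule: finite_induct)
  case empty
  then show ?case by simp
next
  case (insert a J)
  define Y where "Y x = (\<Sum>j\<in>J. c j x)" for x
  define W where "W x = (\<Sum>j\<in>J. (c j x)^2)" for x
  define d where "d = c a"
  have Y_fixed: "Y (\<tau> a x) = Y x" if "x \<in> P" for x
    unfolding Y_def using that insert.hyps(2) insert.prems(2) by (intro sum.cong) auto
  have d_flip: "d (\<tau> a x) = - d x" and h_fixed: "h (\<tau> a x) = h x" if "x \<in> P" for x
    unfolding d_def using that insert.prems(2,3) by auto
  have odd_term: "(\<Sum>x\<in>P. h x * Y x ^ n * d x ^ (2 * l + 1)) = 0" for n l
  proof (rule sum_eq_zero_if_odd_under[where \<tau> = "\<tau> a"])
    show "(\<Sum>x\<in>P. f (\<tau> a x)) = (\<Sum>x\<in>P. f x)" for f :: "'a \<Rightarrow> real"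
      using insert.prems(1)[of a f] by simp
    show "h (\<tau> a x) * Y (\<tau> a x) ^ n * d (\<tau> a x) ^ (2 * l + 1)
        = - (h x * Y x ^ n * d x ^ (2 * l + 1))" if "x \<in> P" for x
      using that by (simp add: Y_fixed d_flip h_fixed power_minus_odd)
  qed
  have middle: "(\<Sum>x\<in>P. (h x * d x ^ 2) * Y x ^ 2) = (\<Sum>x\<in>P. (h x * d x ^ 2) * W x)"
    unfolding Y_def W_def
  proof (rule sum_weighted_square_sign_symmetric[where \<tau> = \<tau>])
    show "finite J" by (fact insert.hyps(1))
  qed (use insert.hyps(2) insert.prems in \<open>auto simp: d_def\<close>)
  have IH: "(\<Sum>x\<in>P. h x * Y x ^ 4) \<le> 3 * (\<Sum>x\<in>P. h x * W x ^ 2)"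
    unfolding Y_def W_def by (rule insert.IH) (use insert.prems in auto)
  \<comment> \<open>Odd exponents of \<open>d\<close> are written as \<open>2 * l + 1\<close> so that \<open>odd_term\<close> applies.\<close>
  have "(\<Sum>x\<in>P. h x * (d x + Y x)^4)
      = (\<Sum>x\<in>P. h x * Y x ^ 4) + 4 * (\<Sum>x\<in>P. h x * Y x ^ 3 * d x ^ (2 * 0 + 1))
        + 6 * (\<Sum>x\<in>P. (h x * d x ^ 2) * Y x ^ 2)
        + 4 * (\<Sum>x\<in>P. h x * Y x ^ 1 * d x ^ (2 * 1 + 1)) + (\<Sum>x\<in>P. h x * d x ^ 4)"
    by (simp add: power_def numeral_eq_Suc algebra_simps sum.distrib sum_distrib_left)
  also have "\<dots> \<le> 3 * (\<Sum>x\<in>P. h x * W x ^ 2) + 6 * (\<Sum>x\<in>P. (h x * d x ^ 2) * W x)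
        + 3 * (\<Sum>x\<in>P. h x * d x ^ 4)"
  proof -
    have "0 \<le> (\<Sum>x\<in>P. h x * d x ^ 4)"
      using insert.prems(4) by (simp add: sum_nonneg)
    then show ?thesis unfolding odd_term middle using IH by simp
  qed
  also have "\<dots> = 3 * (\<Sum>x\<in>P. h x * (d x ^ 2 + W x)^2)"
    by (simp add: power_def numeral_eq_Suc algebra_simps sum.distrib sum_distrib_left)
  finally show ?case
    using insert.hyps unfolding Y_def W_def d_def by simp
qed

lemma sum_atLeastAtMost_pairs:
  fixes f :: "nat \<Rightarrow> 'a :: comm_monoid_add"
  shows "(\<Sum>i=1..2*m. f i) = (\<Sum>j=1..m. f (2*j-1) + f (2*j))"
proof (induction m)
  case (Suc m)
  have "{1..2 * Suc m} = insert (2*m+2) (insert (2*m+1) {1..2*m})" by auto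
  then have "(\<Sum>i=1..2 * Suc m. f i) = f (2*m+1) + f (2*m+2) + (\<Sum>i=1..2*m. f i)"
    by (simp add: add_ac)
  also have "\<dots> = (\<Sum>j=1..Suc m. f (2*j-1) + f (2*j))"
    using Suc by (simp add: add_ac)
  finally show ?case .
qed simp

lemma sum_permutations_mult_nonpos:
  fixes q :: "'a \<Rightarrow> real"
  assumes "finite K" and "a \<in> K" and "b \<in> K" and "a \<noteq> b"
    and sum_zero: "(\<Sum>i\<in>K. q i) = 0"
  shows "(\<Sum>\<pi> | \<pi> permutes K. q (\<pi> a) * q (\<pi> b)) \<le> 0"
proof -
  let ?P = "{\<pi>. \<pi> permutes K}"
  define F where "F = (\<Sum>\<pi>\<in>?P. q (\<pi> a) * q (\<pi> b))"
  \<comment> \<open>Composing with the transposition of \<open>b\<close> and \<open>b'\<close> shows that \<open>F\<close> does not depend on \<open>b\<close>.\<close>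
  have F_eq: "(\<Sum>\<pi>\<in>?P. q (\<pi> a) * q (\<pi> b')) = F" if "b' \<in> K - {a}" for b'
  proof -
    have swap: "Transposition.transpose b b' permutes K"
      using \<open>b \<in> K\<close> that by (auto intro: permutes_swap_id)
    have "F = (\<Sum>\<pi>\<in>?P. q ((\<pi> \<circ> Transposition.transpose b b') a) * q ((\<pi> \<circ> Transposition.transpose b b') b))"
      unfolding F_def by (rule sum_permutations_compose_right[OF swap])
    also have "\<dots> = (\<Sum>\<pi>\<in>?P. q (\<pi> a) * q (\<pi> b'))"
      using \<open>a \<noteq> b\<close> that by (intro sum.cong) (auto simp: transpose_def)
    finally show ?thesis by simp
  qed
  have "(\<Sum>i\<in>K. q (\<pi> i)) = 0" if "\<pi> permutes K" for \<pi>
    using sum.permute[OF that, of q] sum_zero by (simp add: o_def)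
  then have "0 = (\<Sum>\<pi>\<in>?P. q (\<pi> a) * (\<Sum>i\<in>K. q (\<pi> i)))"
    by simp
  also have "\<dots> = (\<Sum>\<pi>\<in>?P. q (\<pi> a) ^ 2 + (\<Sum>i\<in>K-{a}. q (\<pi> a) * q (\<pi> i)))"
    using assms(1,2)
    by (intro sum.cong) (auto simp: sum.remove power2_eq_square distrib_left sum_distrib_left)
  also have "\<dots> = (\<Sum>\<pi>\<in>?P. q (\<pi> a) ^ 2) + (\<Sum>i\<in>K-{a}. \<Sum>\<pi>\<in>?P. q (\<pi> a) * q (\<pi> i))"
    by (simp add: sum.distrib sum.swap[of _ _ "K-{a}"])
  also have "\<dots> = (\<Sum>\<pi>\<in>?P. q (\<pi> a) ^ 2) + real (card (K-{a})) * F"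
    using F_eq by simp
  finally have "real (card (K-{a})) * F = - (\<Sum>\<pi>\<in>?P. q (\<pi> a) ^ 2)"
    by linarith
  moreover have "card (K-{a}) > 0"
    using assms(1-4) by (metis card_gt_0_iff empty_iff finite_Diff insert_Diff insert_iff)
  moreover have "(\<Sum>\<pi>\<in>?P. q (\<pi> a) ^ 2) \<ge> 0"
    by (auto intro: sum_nonneg)
  ultimately show ?thesis
    unfolding F_def by (smt (verit, best) mult_pos_pos of_nat_0_less_iff)
qed

lemma exists_permutes_image_eq:
  assumes "finite K" and "S \<subseteq> K" and "S' \<subseteq> K" and "card S = card S'"
  shows "\<exists>\<sigma>. \<sigma> permutes K \<and> \<sigma> ` S = S'"
proof -
  have fin: "finite S" "finite S'"
    using assms finite_subset by auto
  obtain g where g: "bij_betw g S S'"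
    using finite_same_card_bij[OF fin assms(4)] by blast
  have "card (K - S) = card (K - S')"
    using assms fin by (simp add: card_Diff_subset)
  with \<open>finite K\<close> obtain h where h: "bij_betw h (K - S) (K - S')"
    by (meson finite_Diff finite_same_card_bij)
  define \<sigma> where "\<sigma> x = (if x \<in> S then g x else if x \<in> K then h x else x)" for x
  have on_S: "bij_betw \<sigma> S S'"
    using g by (rule bij_betw_cong[THEN iffD1, rotated]) (auto simp: \<sigma>_def)
  have "bij_betw \<sigma> (K - S) (K - S')"
    using h by (rule bij_betw_cong[THEN iffD1, rotated]) (auto simp: \<sigma>_def)
  then have "bij_betw \<sigma> (S \<union> (K - S)) (S' \<union> (K - S'))"
    using on_S by (intro bij_betw_combine) auto
  then have "bij_betw \<sigma> K K"
    using assms(2,3) by (simp add: Un_absorb1 Un_absorb2)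
  then have "\<sigma> permutes K"
    by (rule bij_imp_permutes) (use assms(2) in \<open>auto simp: \<sigma>_def\<close>)
  moreover have "\<sigma> ` S = S'"
    using on_S by (simp add: bij_betw_def)
  ultimately show ?thesis by blast
qed

lemma sum_square_le_card_abs_gt:
  fixes X :: "'a \<Rightarrow> real" and M t :: real
  assumes "finite P" and "M > 0" and fourth: "(\<Sum>x\<in>P. X x ^ 4) \<le> M * (\<Sum>x\<in>P. X x ^ 2)"
  shows "(\<Sum>x\<in>P. X x ^ 2) \<le> 2 * card P * t^2 + M * card {x\<in>P. t < \<bar>X x\<bar>}"
proof -
  \<comment> \<open>On the event \<open>|X| > t\<close> use AM-GM: \<open>X\<^sup>2 \<le> X\<^sup>4 / (2M) + M/2\<close>.\<close>
  have pointwise: "X x ^ 2 \<le> t^2 + X x ^ 4 / (2 * M) + (if t < \<bar>X x\<bar> then M / 2 else 0)" for x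
  proof (cases "t < \<bar>X x\<bar>")
    case True
    have "0 \<le> (X x ^ 2 - M)^2" by simp
    then have "X x ^ 2 \<le> X x ^ 4 / (2 * M) + M / 2"
      using \<open>M > 0\<close> by (simp add: field_simps power2_eq_square power4_eq_xxxx)
    moreover have "0 \<le> t^2" by simp
    ultimately have "X x ^ 2 \<le> t^2 + X x ^ 4 / (2 * M) + M / 2" by linarith
    then show ?thesis using True by simp
  next
    case False
    then have "\<bar>X x\<bar> \<le> \<bar>t\<bar>" by linarith
    then have "X x ^ 2 \<le> t^2"
      by (simp add: abs_le_square_iff)
    moreover have "0 \<le> X x ^ 4 / (2 * M)" using \<open>M > 0\<close> by simp
    ultimately show ?thesis using False by simp
  qed
  have "(\<Sum>x\<in>P. X x ^ 2)
      \<le> (\<Sum>x\<in>P. t^2 + X x ^ 4 / (2 * M) + (if t < \<bar>X x\<bar> then M / 2 else 0))"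
    by (intro sum_mono pointwise)
  also have "\<dots> = card P * t^2 + (\<Sum>x\<in>P. X x ^ 4) / (2 * M) + M / 2 * card {x\<in>P. t < \<bar>X x\<bar>}"
    using \<open>finite P\<close> by (simp add: sum.distrib sum_divide_distrib sum.If_cases Int_def)
  also have "\<dots> \<le> card P * t^2 + (\<Sum>x\<in>P. X x ^ 2) / 2 + M / 2 * card {x\<in>P. t < \<bar>X x\<bar>}"
    using fourth \<open>M > 0\<close> by (simp add: field_simps)
  finally show ?thesis by simp
qed

lemma map_pmf_image_permutations:
  assumes "finite K" and "A \<subseteq> K"
  shows "map_pmf (\<lambda>\<pi>. \<pi> ` A) (pmf_of_set {\<pi>. \<pi> permutes K})
       = pmf_of_set {S. S \<subseteq> K \<and> card S = card A}"
proof -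
  define P where "P = {\<pi>. \<pi> permutes K}"
  define T where "T = {S. S \<subseteq> K \<and> card S = card A}"
  define fibre where "fibre S = {\<pi>\<in>P. \<pi> ` A = S}" for S
  have finite_P: "finite P" and "id \<in> P"
    unfolding P_def using \<open>finite K\<close> by (auto simp: finite_permutations permutes_id)
  then have "P \<noteq> {}" by blast
  have finite_T: "finite T"
    unfolding T_def using \<open>finite K\<close> by (auto intro: finite_subset[of _ "Pow K"])
  have image_in_T: "\<pi> ` A \<in> T" if "\<pi> \<in> P" for \<pi>
  proof -
    have \<pi>: "\<pi> permutes K" using that by (simp add: P_def)
    have "\<pi> ` A \<subseteq> K"
      using permutes_image[OF \<pi>] \<open>A \<subseteq> K\<close> by blast
    moreover have "inj_on \<pi> A"
      using inj_on_subset[OF permutes_inj[OF \<pi>] subset_UNIV] .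
    ultimately show ?thesis unfolding T_def by (simp add: card_image)
  qed
  \<comment> \<open>Composing with a permutation mapping \<open>S\<close> to \<open>S'\<close> injects the fibre over \<open>S\<close> into that over \<open>S'\<close>.\<close>
  have card_fibre_le: "card (fibre S) \<le> card (fibre S')" if in_T: "S \<in> T" "S' \<in> T" for S S'
  proof -
    obtain \<sigma> where \<sigma>: "\<sigma> permutes K" "\<sigma> ` S = S'"
      using exists_permutes_image_eq[OF \<open>finite K\<close>, of S S'] in_T by (auto simp: T_def)
    have "inj_on ((\<circ>) \<sigma>) (fibre S)"
      using permutes_inj[OF \<sigma>(1)] by (auto intro!: inj_onI simp: fun_eq_iff inj_eq)
    moreover have "(\<circ>) \<sigma> ` fibre S \<subseteq> fibre S'"
      using \<sigma> by (auto simp: fibre_def P_def permutes_compose image_comp)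
    ultimately show ?thesis
      using finite_P by (intro card_inj_on_le) (auto simp: fibre_def)
  qed
  have "A \<in> T" using \<open>A \<subseteq> K\<close> by (simp add: T_def)
  define N where "N = card (fibre A)"
  have card_fibre: "card (fibre S) = N" if "S \<in> T" for S
    using card_fibre_le[OF that \<open>A \<in> T\<close>] card_fibre_le[OF \<open>A \<in> T\<close> that] by (simp add: N_def)
  have "(\<lambda>\<pi>. \<pi> ` A) ` P \<subseteq> T"
    using image_in_T by blast
  then have "card P = (\<Sum>S\<in>T. card (fibre S))"
    unfolding fibre_def using sum.group[OF finite_P finite_T, of _ "\<lambda>_. 1::nat"] by simp
  then have card_P: "card P = N * card T"
    using card_fibre by simp
  have "T \<noteq> {}" using \<open>A \<in> T\<close> by blast
  have "map_pmf (\<lambda>\<pi>. \<pi> ` A) (pmf_of_set P) = pmf_of_set T"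
  proof (rule pmf_eqI)
    fix S
    have "pmf (map_pmf (\<lambda>\<pi>. \<pi> ` A) (pmf_of_set P)) S = card (fibre S) / card P"
      using finite_P \<open>P \<noteq> {}\<close> by (simp add: pmf_map measure_pmf_of_set fibre_def Int_def vimage_def)
    also have "\<dots> = indicator T S / card T"
    proof (cases "S \<in> T")
      case True
      have "N > 0"
        using \<open>P \<noteq> {}\<close> finite_P card_P by (cases N) auto
      then show ?thesis using True by (simp add: card_fibre card_P)
    next
      case False
      then have "fibre S = {}" using image_in_T by (auto simp: fibre_def)
      then show ?thesis using False by simp
    qed
    finally show "pmf (map_pmf (\<lambda>\<pi>. \<pi> ` A) (pmf_of_set P)) S = pmf (pmf_of_set T) S"
      using \<open>T \<noteq> {}\<close> finite_T by simp
  qed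
  then show ?thesis by (simp add: P_def T_def)
qed

locale zero_sum_pairing =
  fixes m :: nat and q :: "nat \<Rightarrow> real"
  assumes sum_zero: "(\<Sum>i=1..2*m. q i) = 0"
begin

abbreviation perms :: "(nat \<Rightarrow> nat) set" where
  "perms \<equiv> {\<pi>. \<pi> permutes {1..2*m}}"

definition odd_sum :: "(nat \<Rightarrow> nat) \<Rightarrow> real" where
  "odd_sum \<pi> = (\<Sum>j=1..m. q (\<pi> (2*j-1)))"

definition pair_diff :: "nat \<Rightarrow> (nat \<Rightarrow> nat) \<Rightarrow> real" where
  "pair_diff j \<pi> = (q (\<pi> (2*j-1)) - q (\<pi> (2*j))) / 2"

definition pair_var :: "(nat \<Rightarrow> nat) \<Rightarrow> real" where
  "pair_var \<pi> = (\<Sum>j=1..m. pair_diff j \<pi> ^ 2)"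

definition energy :: real where
  "energy = (\<Sum>i=1..2*m. q i ^ 2)"

lemma pair_mem: "j \<in> {1..m} \<Longrightarrow> 2*j-1 \<in> {1..2*m} \<and> 2*j \<in> {1..2*m}"
  by auto

lemma finite_perms: "finite perms"
  by (simp add: finite_permutations)

lemma perms_nonempty: "perms \<noteq> {}"
  using permutes_id[of "{1..2*m}"] by blast

lemma sum_permuted: "\<pi> \<in> perms \<Longrightarrow> (\<Sum>i=1..2*m. f (\<pi> i)) = (\<Sum>i=1..2*m. f i)"
  using sum.permute[of \<pi> "{1..2*m}" f] by (simp add: o_def)

lemma odd_sum_eq_sum_pair_diff:
  assumes "\<pi> \<in> perms"
  shows "odd_sum \<pi> = (\<Sum>j=1..m. pair_diff j \<pi>)"
proof -
  have "0 = (\<Sum>i=1..2*m. q (\<pi> i))"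
    using sum_permuted[OF assms, of q] sum_zero by simp
  also have "\<dots> = odd_sum \<pi> + (\<Sum>j=1..m. q (\<pi> (2*j)))"
    unfolding sum_atLeastAtMost_pairs odd_sum_def by (simp add: sum.distrib)
  finally show ?thesis
    by (simp add: pair_diff_def odd_sum_def sum_subtractf flip: sum_divide_distrib)
qed

lemma sum_pair_squares:
  assumes "\<pi> \<in> perms"
  shows "(\<Sum>j=1..m. q (\<pi> (2*j-1)) ^ 2 + q (\<pi> (2*j)) ^ 2) = energy"
  using sum_permuted[OF assms, of "\<lambda>i. q i ^ 2"]
  unfolding energy_def sum_atLeastAtMost_pairs by simp

lemma pair_var_le:
  assumes "\<pi> \<in> perms"
  shows "pair_var \<pi> \<le> energy / 2"
proof -
  have "((a - b) / 2) ^ 2 \<le> (a ^ 2 + b ^ 2) / 2" for a b :: real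
    using zero_le_power2[of "a + b"] by (simp add: power2_eq_square field_simps)
  then have "pair_var \<pi> \<le> (\<Sum>j=1..m. (q (\<pi> (2*j-1)) ^ 2 + q (\<pi> (2*j)) ^ 2) / 2)"
    unfolding pair_var_def pair_diff_def by (intro sum_mono)
  also have "\<dots> = energy / 2"
    using sum_pair_squares[OF assms] by (simp flip: sum_divide_distrib)
  finally show ?thesis .
qed

lemma sum_pair_var_ge: "card perms * energy / 4 \<le> (\<Sum>\<pi>\<in>perms. pair_var \<pi>)"
proof -
  have "pair_var \<pi> = energy / 4 - (\<Sum>j=1..m. q (\<pi> (2*j-1)) * q (\<pi> (2*j))) / 2"
    if "\<pi> \<in> perms" for \<pi>
  proof -
    have "pair_var \<pi> = (\<Sum>j=1..m. (q (\<pi> (2*j-1)) ^ 2 + q (\<pi> (2*j)) ^ 2) / 4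
                                  - q (\<pi> (2*j-1)) * q (\<pi> (2*j)) / 2)"
      unfolding pair_var_def pair_diff_def by (intro sum.cong) (auto simp: power2_eq_square field_simps)
    then show ?thesis
      using sum_pair_squares[OF that] by (simp add: sum_subtractf flip: sum_divide_distrib)
  qed
  then have "(\<Sum>\<pi>\<in>perms. pair_var \<pi>)
      = card perms * energy / 4 - (\<Sum>\<pi>\<in>perms. \<Sum>j=1..m. q (\<pi> (2*j-1)) * q (\<pi> (2*j))) / 2"
    by (simp add: sum_subtractf flip: sum_divide_distrib)
  also have "(\<Sum>\<pi>\<in>perms. \<Sum>j=1..m. q (\<pi> (2*j-1)) * q (\<pi> (2*j)))
      = (\<Sum>j=1..m. \<Sum>\<pi>\<in>perms. q (\<pi> (2*j-1)) * q (\<pi> (2*j)))"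
    by (rule sum.swap)
  moreover have "(\<Sum>j=1..m. \<Sum>\<pi>\<in>perms. q (\<pi> (2*j-1)) * q (\<pi> (2*j))) \<le> 0"
    using pair_mem sum_zero
    by (intro sum_nonpos sum_permutations_mult_nonpos) auto
  ultimately show ?thesis by linarith
qed

abbreviation swap_pair :: "nat \<Rightarrow> (nat \<Rightarrow> nat) \<Rightarrow> nat \<Rightarrow> nat" where
  "swap_pair j \<pi> \<equiv> \<pi> \<circ> Transposition.transpose (2*j-1) (2*j)"

lemma sum_perms_swap_pair:
  assumes "j \<in> {1..m}"
  shows "(\<Sum>\<pi>\<in>perms. f (swap_pair j \<pi>)) = (\<Sum>\<pi>\<in>perms. f \<pi>)"
  using pair_mem[OF assms]
  by (intro sum_permutations_compose_right[symmetric] permutes_swap_id) auto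

lemma pair_diff_swap_pair:
  assumes "i \<in> {1..m}" and "j \<in> {1..m}"
  shows "pair_diff i (swap_pair j \<pi>) = (if i = j then - pair_diff i \<pi> else pair_diff i \<pi>)"
proof (cases "i = j")
  case True
  then have "2*j-1 \<noteq> 2*j" using assms by auto
  with True show ?thesis by (simp add: pair_diff_def transpose_def field_simps)
next
  case False
  then have "2*i-1 \<noteq> 2*j-1" "2*i-1 \<noteq> 2*j" "2*i \<noteq> 2*j-1" "2*i \<noteq> 2*j" using assms by auto
  with False show ?thesis by (simp add: pair_diff_def transpose_def)
qed

lemma sum_odd_sum_square: "(\<Sum>\<pi>\<in>perms. odd_sum \<pi> ^ 2) = (\<Sum>\<pi>\<in>perms. pair_var \<pi>)"
proof -
  have "(\<Sum>\<pi>\<in>perms. 1 * (\<Sum>j\<in>{1..m}. pair_diff j \<pi>) ^ 2)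
      = (\<Sum>\<pi>\<in>perms. 1 * (\<Sum>j\<in>{1..m}. pair_diff j \<pi> ^ 2))"
    by (rule sum_weighted_square_sign_symmetric[where \<tau> = "\<lambda>j \<pi>. swap_pair j \<pi>"])
      (blast intro: sum_perms_swap_pair pair_diff_swap_pair | simp)+
  then show ?thesis
    by (simp add: odd_sum_eq_sum_pair_diff pair_var_def)
qed

lemma sum_odd_sum_fourth:
  "(\<Sum>\<pi>\<in>perms. odd_sum \<pi> ^ 4) \<le> 3 * energy / 2 * (\<Sum>\<pi>\<in>perms. odd_sum \<pi> ^ 2)"
proof -
  have "(\<Sum>\<pi>\<in>perms. 1 * (\<Sum>j\<in>{1..m}. pair_diff j \<pi>) ^ 4)
      \<le> 3 * (\<Sum>\<pi>\<in>perms. 1 * (\<Sum>j\<in>{1..m}. pair_diff j \<pi> ^ 2) ^ 2)"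
    by (rule sum_weighted_fourth_power_sign_symmetric[where \<tau> = "\<lambda>j \<pi>. swap_pair j \<pi>"])
      (blast intro: sum_perms_swap_pair pair_diff_swap_pair | simp)+
  then have "(\<Sum>\<pi>\<in>perms. odd_sum \<pi> ^ 4) \<le> 3 * (\<Sum>\<pi>\<in>perms. pair_var \<pi> ^ 2)"
    by (simp add: odd_sum_eq_sum_pair_diff pair_var_def)
  also have "\<dots> \<le> 3 * (\<Sum>\<pi>\<in>perms. energy / 2 * pair_var \<pi>)"
  proof -
    have "pair_var \<pi> ^ 2 \<le> energy / 2 * pair_var \<pi>" if "\<pi> \<in> perms" for \<pi>
    proof -
      have "pair_var \<pi> * pair_var \<pi> \<le> energy / 2 * pair_var \<pi>"
        by (rule mult_right_mono[OF pair_var_le[OF that]]) (simp add: pair_var_def sum_nonneg)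
      then show ?thesis by (simp add: power2_eq_square)
    qed
    then show ?thesis
      by (intro mult_left_mono sum_mono) auto
  qed
  also have "\<dots> = 3 * energy / 2 * (\<Sum>\<pi>\<in>perms. odd_sum \<pi> ^ 2)"
    unfolding sum_odd_sum_square by (simp add: sum_distrib_left mult.assoc)
  finally show ?thesis .
qed

lemma large_odd_sum_fraction_gt:
  assumes "20 * t ^ 2 < energy"
  shows "card {\<pi>\<in>perms. t < \<bar>odd_sum \<pi>\<bar>} / card perms > 1 / 10"
proof -
  let ?G = "card {\<pi>\<in>perms. t < \<bar>odd_sum \<pi>\<bar>}"
  have "energy > 0" using assms by (smt (verit) zero_le_power2)
  have "card perms > 0"
    using finite_perms perms_nonempty card_gt_0_iff by blast
  have "card perms * energy / 4 \<le> (\<Sum>\<pi>\<in>perms. odd_sum \<pi> ^ 2)"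
    using sum_pair_var_ge sum_odd_sum_square by simp
  also have "\<dots> \<le> 2 * card perms * t ^ 2 + 3 * energy / 2 * ?G"
    using \<open>energy > 0\<close> by (intro sum_square_le_card_abs_gt[OF finite_perms _ sum_odd_sum_fourth]) simp
  moreover have "2 * card perms * t ^ 2 < card perms * energy / 10"
    using assms \<open>card perms > 0\<close> by simp
  ultimately have "card perms * energy < 10 * ?G * energy"
    by (simp add: field_simps)
  then show ?thesis
    using \<open>energy > 0\<close> \<open>card perms > 0\<close> by (simp add: field_simps)
qed

definition odd_positions :: "nat set" where
  "odd_positions = (\<lambda>j. 2*j-1) ` {1..m}"

lemma card_odd_positions: "card odd_positions = m"
proof -
  have "inj_on (\<lambda>j. 2*j-1) {1..m}" by (auto simp: inj_on_def)
  then show ?thesis by (simp add: odd_positions_def card_image)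
qed

lemma card_image_odd_positions: "\<pi> \<in> perms \<Longrightarrow> card (\<pi> ` odd_positions) = m"
  using permutes_inj[of \<pi> "{1..2*m}"] card_odd_positions by (simp add: card_image inj_on_subset)

lemma rand_subset_eq_map_perms:
  "rand_subset (2*m) m = map_pmf (\<lambda>\<pi>. \<pi> ` odd_positions) (pmf_of_set perms)"
proof -
  have "odd_positions \<subseteq> {1..2*m}" by (auto simp: odd_positions_def)
  then show ?thesis
    using map_pmf_image_permutations[of "{1..2*m}" odd_positions] card_odd_positions
    by (simp add: rand_subset_def)
qed

lemma pset_image_odd_positions:
  assumes "\<pi> \<in> perms"
  shows "pset q (\<pi> ` odd_positions) = odd_sum \<pi>"
proof -
  have "inj_on (\<lambda>j. \<pi> (2*j-1)) {1..m}"
  proof (rule inj_onI)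
    fix i j assume "i \<in> {1..m}" "j \<in> {1..m}" and "\<pi> (2*i-1) = \<pi> (2*j-1)"
    then show "i = j"
      using permutes_inj[of \<pi> "{1..2*m}"] assms by (auto simp: inj_eq)
  qed
  then show ?thesis
    unfolding pset_def odd_sum_def odd_positions_def image_image by (simp add: sum.reindex)
qed

end

lemma sum_square_deviation_gt:
  assumes "\<gamma> > 0" and "d_TV k p (unif k) > \<gamma>"
  shows "4 * \<gamma> ^ 2 < real k * (\<Sum>i=1..k. (p i - 1 / real k) ^ 2)"
proof -
  have "2 * \<gamma> < (\<Sum>i=1..k. \<bar>p i - 1 / real k\<bar>)"
    using assms(2) by (simp add: d_TV_def unif_def)
  then have "(2 * \<gamma>) ^ 2 < (\<Sum>i=1..k. \<bar>p i - 1 / real k\<bar>) ^ 2"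
    using assms(1) by (intro power_strict_mono) auto
  then have "4 * \<gamma> ^ 2 < (\<Sum>i=1..k. \<bar>p i - 1 / real k\<bar>) ^ 2"
    by (simp add: power_mult_distrib)
  also have "\<dots> \<le> (\<Sum>i=1..k. \<bar>p i - 1 / real k\<bar> ^ 2) * card {1..k}"
    by (rule sum_squared_le_sum_of_squares)
  finally show ?thesis
    by (simp add: mult.commute)
qed

lemma pset_diff_const:
  fixes c :: real
  assumes "finite S"
  shows "pset (\<lambda>i. p i - c) S = pset p S - card S * c"
  using assms by (simp add: pset_def sum_subtractf)

theorem corollary4p2:
  fixes k :: nat and \<gamma> :: real and p :: "nat \<Rightarrow> real"
  assumes "even k" and "k \<ge> 2" and "\<gamma> > 0"
    and "in_simplex k p"
    and "d_TV k p (unif k) > \<gamma>"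
  shows "measure_pmf.prob (rand_subset k (k div 2))
           {S. \<bar>pset p S - 1/2\<bar> > \<gamma> / sqrt (5 * real k)} > 1/477"
proof -
  obtain m where k: "k = 2 * m" using \<open>even k\<close> by blast
  have "m > 0" using \<open>k \<ge> 2\<close> k by simp
  define q where "q i = p i - 1 / real k" for i
  define t where "t = \<gamma> / sqrt (5 * real k)"
  interpret zero_sum_pairing m q
    using \<open>in_simplex k p\<close> \<open>m > 0\<close> by unfold_locales (simp add: q_def sum_subtractf in_simplex_def k)
  have "20 * t ^ 2 < energy"
    using sum_square_deviation_gt[OF assms(3,5)] \<open>m > 0\<close>
    by (simp add: t_def power_divide energy_def q_def k field_simps)
  have deviation: "pset p (\<pi> ` odd_positions) - 1/2 = odd_sum \<pi>" if "\<pi> \<in> perms" for \<pi>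
    using pset_diff_const[of "\<pi> ` odd_positions" p "1 / real k"] card_image_odd_positions[OF that]
      pset_image_odd_positions[OF that] \<open>m > 0\<close>
    by (simp add: q_def[abs_def] odd_positions_def k)
  have "perms \<inter> {\<pi>. t < \<bar>pset p (\<pi> ` odd_positions) - 1/2\<bar>} = {\<pi>\<in>perms. t < \<bar>odd_sum \<pi>\<bar>}"
    using deviation by auto
  then have "measure_pmf.prob (rand_subset k (k div 2)) {S. t < \<bar>pset p S - 1/2\<bar>}
      = card {\<pi>\<in>perms. t < \<bar>odd_sum \<pi>\<bar>} / card perms"
    using finite_perms perms_nonempty by (simp add: k rand_subset_eq_map_perms measure_pmf_of_set)
  also have "\<dots> > 1/10"
    by (rule large_odd_sum_fraction_gt[OF \<open>20 * t ^ 2 < energy\<close>])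
  finally show ?thesis
    by (simp add: t_def)
qed

end
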